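(* Let $K\ge 1$, let $a_1,\dots,a_K\ge 0$ with $\sum_{k=1}^K a_k=1$, and let $0<\lambda<\frac{1}{K}$. For each fixed $\delta>0$ let $z^{\delta}\in\mathbb{R}^K_+$ be a solution (global minimizer) of $$\min_{z\in\mathbb{R}^K}\; -\sum_{k=1}^K a_k\log(z_k)+\lambda\sum_{k=1}^K\log(\delta+z_k)\quad\text{subject to } z\ge 0,\ \sum_{k=1}^K z_k=1.$$ Then $\lim_{\delta\to 0} z^{\delta}=z^0$, where $$z^0_k:=\frac{(a_k-\lambda)_+}{\sum_{j=1}^K (a_j-\lambda)_+}\quad\text{for each }k\in\{1,\dots,K\}.$$
   Context: $(t)_+=\max(t,0)$. The inequality $z\ge 0$ is entrywise. *)

theory Defs
  imports "HOL-Analysis.Analysis"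
begin

definition simplex_feasible :: "real ^ 'k \<Rightarrow> bool" where
  "simplex_feasible z \<longleftrightarrow> (\<forall>k. z $ k \<ge> 0) \<and> (\<Sum>k\<in>UNIV. z $ k) = 1"

text \<open>The objective has finite value exactly when z_k > 0 whenever a_k > 0
  (convention 0 * log 0 = 0); otherwise it is +infinity.\<close>
definition finite_obj :: "real ^ 'k \<Rightarrow> real ^ 'k \<Rightarrow> bool" where
  "finite_obj a z \<longleftrightarrow> (\<forall>k. a $ k > 0 \<longrightarrow> z $ k > 0)"

definition obj :: "real ^ 'k \<Rightarrow> real \<Rightarrow> real \<Rightarrow> real ^ 'k \<Rightarrow> real" where
  "obj a lam \<delta> z = - (\<Sum>k\<in>UNIV. a $ k * ln (z $ k)) + lam * (\<Sum>k\<in>UNIV. ln (\<delta> + z $ k))"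

text \<open>Global minimizer of the (extended-real valued) problem; since a is a feasible point
  with finite objective, a minimizer must have finite objective.\<close>
definition is_minimizer :: "real ^ 'k \<Rightarrow> real \<Rightarrow> real \<Rightarrow> real ^ 'k \<Rightarrow> bool" where
  "is_minimizer a lam \<delta> z \<longleftrightarrow> simplex_feasible z \<and> finite_obj a z \<and>
     (\<forall>w. simplex_feasible w \<and> finite_obj a w \<longrightarrow> obj a lam \<delta> z \<le> obj a lam \<delta> w)"

definition pos_part :: "real \<Rightarrow> real" where
  "pos_part t = max t 0"

end

theory Submission
  imports Defs
begin

text \<open>
  Moving mass between two coordinates in the support of a minimizer \<open>z\<close> shows that
  \<open>a\<^sub>k / z\<^sub>k - \<lambda> / (\<delta> + z\<^sub>k)\<close> takes a common value \<open>h\<close> on the support, and since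
  \<open>a\<^sub>k = 0\<close> off the support, \<open>h z\<^sub>k = a\<^sub>k - \<lambda> z\<^sub>k / (\<delta> + z\<^sub>k)\<close> for all \<open>k\<close>. Summing over \<open>k\<close>
  gives \<open>1 - \<lambda> K \<le> h \<le> 1\<close>. The vector \<open>y = h z = (a\<^sub>k - \<lambda> + \<lambda> \<delta> / (\<delta> + z\<^sub>k))\<^sub>k\<close> then
  satisfies \<open>0 \<le> y\<^sub>k - (a\<^sub>k - \<lambda>)\<^sub>+\<close> and \<open>y\<^sub>k (y\<^sub>k - (a\<^sub>k - \<lambda>)\<^sub>+) \<le> (\<delta> + z\<^sub>k) (y\<^sub>k - (a\<^sub>k - \<lambda>)) = \<lambda> \<delta>\<close>,
  so \<open>y \<rightarrow> ((a\<^sub>k - \<lambda>)\<^sub>+)\<^sub>k\<close>, whose sum is at least \<open>1 - \<lambda> K > 0\<close>; finally \<open>z = y / \<Sum>\<^sub>k y\<^sub>k\<close>.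
\<close>

lemma simplex_minimizer_derivatives_eq:
  fixes z :: "real ^ 'k" and G :: "'k \<Rightarrow> real \<Rightarrow> real"
  assumes feas: "simplex_feasible z" and zi: "0 < z $ i" and zj: "0 < z $ j"
    and min: "\<And>w. simplex_feasible w \<Longrightarrow> (\<forall>k. 0 < z $ k \<longrightarrow> 0 < w $ k) \<Longrightarrow>
                (\<Sum>k\<in>UNIV. G k (z $ k)) \<le> (\<Sum>k\<in>UNIV. G k (w $ k))"
    and Gi: "(G i has_real_derivative Di) (at (z $ i))"
    and Gj: "(G j has_real_derivative Dj) (at (z $ j))"
  shows "Di = Dj"
proof (cases "i = j")
  case True
  then show ?thesis using Gi Gj DERIV_unique by blast
next
  case ij: False
  define w where "w t = (\<chi> k. z $ k + (if k = j then t else 0) - (if k = i then t else 0))" for t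
  define \<phi> where "\<phi> t = G i (z $ i - t) + G j (z $ j + t)" for t
  have G_w: "G k (w t $ k) = G k (z $ k) + (if k = i then G i (z $ i - t) - G i (z $ i) else 0)
      + (if k = j then G j (z $ j + t) - G j (z $ j) else 0)" for k t
    using ij by (auto simp: w_def)
  have local_min: "\<forall>t. \<bar>0 - t\<bar> < min (z $ i) (z $ j) \<longrightarrow> \<phi> 0 \<le> \<phi> t"
  proof (intro allI impI)
    fix t assume t: "\<bar>0 - t\<bar> < min (z $ i) (z $ j)"
    have "simplex_feasible (w t)"
      using feas t ij unfolding simplex_feasible_def by (auto simp: w_def sum.distrib sum_subtractf)
    moreover have "\<forall>k. 0 < z $ k \<longrightarrow> 0 < w t $ k"
      using t feas unfolding simplex_feasible_def by (auto simp: w_def)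
    ultimately have "(\<Sum>k\<in>UNIV. G k (z $ k)) \<le> (\<Sum>k\<in>UNIV. G k (w t $ k))"
      by (rule min)
    then show "\<phi> 0 \<le> \<phi> t"
      unfolding G_w \<phi>_def by (simp add: sum.distrib)
  qed
  have "((\<lambda>t. G i (z $ i - t)) has_real_derivative Di * -1) (at 0)"
    using Gi by (intro DERIV_chain2[of "G i"]) (auto intro!: derivative_eq_intros)
  moreover have "((\<lambda>t. G j (z $ j + t)) has_real_derivative Dj * 1) (at 0)"
    using Gj by (intro DERIV_chain2[of "G j"]) (auto intro!: derivative_eq_intros)
  ultimately have "(\<phi> has_real_derivative Di * -1 + Dj * 1) (at 0)"
    unfolding \<phi>_def by (rule DERIV_add)
  then have "Di * -1 + Dj * 1 = 0"
    by (rule DERIV_local_min[OF _ _ local_min]) (use zi zj in auto)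
  then show ?thesis by simp
qed

lemma minimizer_kkt_multiplier:
  fixes a z :: "real ^ 'k"
  assumes a_nonneg: "\<forall>k. 0 \<le> a $ k" and min: "is_minimizer a lam \<delta> z" and \<delta>: "0 < \<delta>"
  obtains h where "\<And>k. h * z $ k = a $ k - lam * z $ k / (\<delta> + z $ k)"
proof -
  define G where "G k s = - (a $ k * ln s) + lam * ln (\<delta> + s)" for k s
  have feas: "simplex_feasible z" and fin: "finite_obj a z"
    and le: "\<And>w. simplex_feasible w \<Longrightarrow> finite_obj a w \<Longrightarrow> obj a lam \<delta> z \<le> obj a lam \<delta> w"
    using min unfolding is_minimizer_def by auto
  have z_nonneg: "0 \<le> z $ k" for k
    using feas unfolding simplex_feasible_def by auto
  have G_min: "(\<Sum>k\<in>UNIV. G k (z $ k)) \<le> (\<Sum>k\<in>UNIV. G k (w $ k))"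
    if "simplex_feasible w" "\<forall>k. 0 < z $ k \<longrightarrow> 0 < w $ k" for w
  proof -
    have "finite_obj a w"
      using fin that(2) unfolding finite_obj_def by blast
    then have "obj a lam \<delta> z \<le> obj a lam \<delta> w"
      using le that(1) by blast
    then show ?thesis
      unfolding obj_def G_def by (simp add: sum_subtractf sum_distrib_left)
  qed
  have G_deriv: "(G k has_real_derivative - (a $ k / z $ k) + lam / (\<delta> + z $ k)) (at (z $ k))"
    if "0 < z $ k" for k
    unfolding G_def using that \<delta>
    by (auto intro!: derivative_eq_intros simp: divide_inverse)
  have "\<exists>i. 0 < z $ i"
  proof (rule ccontr)
    assume "\<nexists>i. 0 < z $ i"
    then have "\<forall>k. z $ k = 0" using z_nonneg by (metis less_eq_real_def)
    then show False using feas unfolding simplex_feasible_def by simp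
  qed
  then obtain i where i: "0 < z $ i" ..
  define h where "h = a $ i / z $ i - lam / (\<delta> + z $ i)"
  have "h * z $ k = a $ k - lam * z $ k / (\<delta> + z $ k)" for k
  proof (cases "0 < z $ k")
    case True
    have "h = a $ k / z $ k - lam / (\<delta> + z $ k)"
      using simplex_minimizer_derivatives_eq[OF feas i True G_min G_deriv[OF i] G_deriv[OF True]]
      unfolding h_def by simp
    then show ?thesis using True by (simp add: field_simps)
  next
    case False
    then have "z $ k = 0" using z_nonneg[of k] by linarith
    moreover have "a $ k = 0"
      using fin a_nonneg \<open>z $ k = 0\<close> unfolding finite_obj_def by (metis less_irrefl order_le_less)
    ultimately show ?thesis by simp
  qed
  then show thesis by (rule that)
qed

lemma kkt_multiplier_bounds:
  fixes a z :: "real ^ 'k"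
  assumes feas: "simplex_feasible z" and a_sum: "(\<Sum>k\<in>UNIV. a $ k) = 1"
    and \<delta>: "0 < \<delta>" and lam: "0 \<le> lam"
    and h: "\<And>k. h * z $ k = a $ k - lam * z $ k / (\<delta> + z $ k)"
  shows "1 - lam * real CARD('k) \<le> h" and "h \<le> 1"
proof -
  have z_sum: "(\<Sum>k\<in>UNIV. z $ k) = 1" and z_nonneg: "\<And>k. 0 \<le> z $ k"
    using feas unfolding simplex_feasible_def by auto
  have "h = (\<Sum>k\<in>UNIV. h * z $ k)"
    by (simp add: z_sum flip: sum_distrib_left)
  also have "\<dots> = 1 - lam * (\<Sum>k\<in>UNIV. z $ k / (\<delta> + z $ k))"
    by (simp add: h a_sum sum_subtractf sum_distrib_left)
  finally have h_eq: "h = 1 - lam * (\<Sum>k\<in>UNIV. z $ k / (\<delta> + z $ k))" .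
  have "0 \<le> z $ k / (\<delta> + z $ k)" and "z $ k / (\<delta> + z $ k) \<le> 1" for k
    using z_nonneg[of k] \<delta> by auto
  then have "0 \<le> (\<Sum>k\<in>UNIV. z $ k / (\<delta> + z $ k))"
    and "(\<Sum>k\<in>UNIV. z $ k / (\<delta> + z $ k)) \<le> real CARD('k)"
    using sum_bounded_above[of UNIV "\<lambda>k. z $ k / (\<delta> + z $ k)" 1] by (auto intro: sum_nonneg)
  then show "1 - lam * real CARD('k) \<le> h" and "h \<le> 1"
    unfolding h_eq using lam by (auto intro: mult_left_mono)
qed

lemma abs_diff_pos_part_le_sqrt:
  fixes \<delta> lam b y z :: real
  assumes \<delta>: "0 < \<delta>" and lam: "0 \<le> lam" and y_nonneg: "0 \<le> y" and y_le: "y \<le> z"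
    and y_eq: "y = b + lam * \<delta> / (\<delta> + z)"
  shows "\<bar>y - pos_part b\<bar> \<le> sqrt (lam * \<delta>)"
proof -
  have dz: "0 < \<delta> + z" using \<delta> y_nonneg y_le by linarith
  have "b \<le> y" using y_eq lam \<delta> dz by simp
  then have gap: "0 \<le> y - pos_part b"
    using y_nonneg unfolding pos_part_def by simp
  have "(y - pos_part b)\<^sup>2 \<le> y * (y - pos_part b)"
    using gap unfolding power2_eq_square pos_part_def by (intro mult_right_mono) auto
  also have "\<dots> \<le> (\<delta> + z) * (y - pos_part b)"
    using gap y_le \<delta> by (intro mult_right_mono) auto
  also have "\<dots> \<le> (\<delta> + z) * (y - b)"
    using dz unfolding pos_part_def by (intro mult_left_mono) auto
  also have "\<dots> = lam * \<delta>"
    using y_eq dz by simp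
  finally show ?thesis
    using gap by (simp add: real_le_rsqrt)
qed

lemma minimizer_normalized_kkt_vector:
  fixes a z :: "real ^ 'k"
  assumes a_nonneg: "\<forall>k. 0 \<le> a $ k" and a_sum: "(\<Sum>k\<in>UNIV. a $ k) = 1"
    and lam: "0 \<le> lam" "lam * real CARD('k) < 1"
    and \<delta>: "0 < \<delta>" and min: "is_minimizer a lam \<delta> z"
  defines "y \<equiv> \<chi> k. a $ k - lam * z $ k / (\<delta> + z $ k)"
  shows "z = (1 / (\<Sum>k\<in>UNIV. y $ k)) *\<^sub>R y"
    and "\<bar>y $ k - pos_part (a $ k - lam)\<bar> \<le> sqrt (lam * \<delta>)"
proof -
  obtain h where h: "\<And>k. h * z $ k = a $ k - lam * z $ k / (\<delta> + z $ k)"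
    using minimizer_kkt_multiplier[OF a_nonneg min \<delta>] by blast
  have feas: "simplex_feasible z"
    using min unfolding is_minimizer_def by simp
  then have z_sum: "(\<Sum>k\<in>UNIV. z $ k) = 1" and z_nonneg: "\<And>k. 0 \<le> z $ k"
    unfolding simplex_feasible_def by auto
  have h_pos: "0 < h" and h_le: "h \<le> 1"
    using kkt_multiplier_bounds[OF feas a_sum \<delta> lam(1) h] lam(2) by auto
  have y: "y = h *\<^sub>R z"
    by (simp add: y_def h vec_eq_iff)
  then have "(\<Sum>k\<in>UNIV. y $ k) = h"
    by (simp add: z_sum flip: sum_distrib_left)
  then show "z = (1 / (\<Sum>k\<in>UNIV. y $ k)) *\<^sub>R y"
    using y h_pos by simp
  have "h * z $ k = (a $ k - lam) + lam * \<delta> / (\<delta> + z $ k)"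
    unfolding h using \<delta> z_nonneg[of k] by (simp add: field_simps)
  moreover have "0 \<le> h * z $ k" and "h * z $ k \<le> z $ k"
    using h_pos h_le z_nonneg[of k] by (auto simp: mult_left_le_one_le)
  ultimately show "\<bar>y $ k - pos_part (a $ k - lam)\<bar> \<le> sqrt (lam * \<delta>)"
    using abs_diff_pos_part_le_sqrt[OF \<delta> lam(1)] y by simp
qed

lemma sum_pos_part_pos:
  fixes a :: "real ^ 'k"
  assumes "(\<Sum>k\<in>UNIV. a $ k) = 1" and "lam * real CARD('k) < 1"
  shows "0 < (\<Sum>k\<in>UNIV. pos_part (a $ k - lam))"
proof -
  have "1 - lam * real CARD('k) = (\<Sum>k\<in>UNIV. a $ k - lam)"
    using assms(1) by (simp add: sum_subtractf)
  also have "\<dots> \<le> (\<Sum>k\<in>UNIV. pos_part (a $ k - lam))"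
    by (intro sum_mono) (simp add: pos_part_def)
  finally show ?thesis using assms(2) by simp
qed

lemma tendsto_normalize_sum:
  fixes y :: "'a \<Rightarrow> real ^ 'k"
  assumes "(y \<longlongrightarrow> p) F" and "(\<Sum>k\<in>UNIV. p $ k) \<noteq> 0"
  shows "((\<lambda>x. (1 / (\<Sum>k\<in>UNIV. y x $ k)) *\<^sub>R y x) \<longlongrightarrow> (1 / (\<Sum>k\<in>UNIV. p $ k)) *\<^sub>R p) F"
  using assms by (intro tendsto_intros) auto

theorem theorem1:
  fixes a :: "real ^ 'k" and lam :: real and z :: "real \<Rightarrow> real ^ 'k"
  assumes "\<forall>k. a $ k \<ge> 0"
    and "(\<Sum>k\<in>UNIV. a $ k) = 1"
    and "0 < lam" and "lam < 1 / real CARD('k)"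
    and "\<forall>\<delta>>0. is_minimizer a lam \<delta> (z \<delta>)"
  shows "(z \<longlongrightarrow> (\<chi> k. pos_part (a $ k - lam) / (\<Sum>j\<in>UNIV. pos_part (a $ j - lam)))) (at_right 0)"
proof -
  define y where "y \<delta> = (\<chi> k. a $ k - lam * z \<delta> $ k / (\<delta> + z \<delta> $ k))" for \<delta>
  define p where "p = (\<chi> k. pos_part (a $ k - lam))"
  have lam_K: "lam * real CARD('k) < 1"
    using assms(4) by (simp add: field_simps)
  note kkt_vector = minimizer_normalized_kkt_vector[OF assms(1,2) less_imp_le[OF assms(3)] lam_K _
      assms(5)[rule_format], folded y_def]
  have "(y \<longlongrightarrow> p) (at_right 0)"
  proof (rule vec_tendstoI)
    fix k
    have "((\<lambda>\<delta>. sqrt (lam * \<delta>)) \<longlongrightarrow> 0) (at_right 0)"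
      by (auto intro!: tendsto_eq_intros)
    moreover have "\<forall>\<^sub>F \<delta> in at_right 0. norm (y \<delta> $ k - p $ k) \<le> sqrt (lam * \<delta>)"
      using eventually_at_right_less[of 0] by eventually_elim (simp add: p_def kkt_vector(2))
    ultimately show "((\<lambda>\<delta>. y \<delta> $ k) \<longlongrightarrow> p $ k) (at_right 0)"
      by (rule Lim_null_comparison[THEN LIM_zero_cancel, rotated])
  qed
  then have "((\<lambda>\<delta>. (1 / (\<Sum>k\<in>UNIV. y \<delta> $ k)) *\<^sub>R y \<delta>) \<longlongrightarrow> (1 / (\<Sum>k\<in>UNIV. p $ k)) *\<^sub>R p) (at_right 0)"
    using sum_pos_part_pos[OF assms(2) lam_K] by (intro tendsto_normalize_sum) (auto simp: p_def)
  moreover have "\<forall>\<^sub>F \<delta> in at_right 0. (1 / (\<Sum>k\<in>UNIV. y \<delta> $ k)) *\<^sub>R y \<delta> = z \<delta>"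
    using eventually_at_right_less[of 0] by eventually_elim (simp flip: kkt_vector(1))
  ultimately have "(z \<longlongrightarrow> (1 / (\<Sum>k\<in>UNIV. p $ k)) *\<^sub>R p) (at_right 0)"
    by (rule Lim_transform_eventually)
  moreover have "(1 / (\<Sum>k\<in>UNIV. p $ k)) *\<^sub>R p
      = (\<chi> k. pos_part (a $ k - lam) / (\<Sum>j\<in>UNIV. pos_part (a $ j - lam)))"
    by (simp add: p_def vec_eq_iff)
  ultimately show ?thesis
    by simp
qed

end
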